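(* Let $R\ge0$ and let $X$ be an $R$-rough geodesic metric space. If $X$ is strongly shortcut then every asymptotic cone of $X$ is strongly shortcut.
   Context: $X$ is $R$-rough geodesic if any $x_1,x_2$ are joined by $f\colon[0,\ell]\to X$, $\ell=d(x_1,x_2)$, $f(0)=x_1,f(\ell)=x_2$, with $|d(f(s),f(t))-|s-t||\le R$. An $R$-circle is a map $\alpha\colon S\to X$ from a Riemannian circle $S$ of length $|S|$ with $d(\alpha(p),\alpha(q))\le d_S(p,q)+R$; for $K>1$ it is $\frac1K$-almost isometric if $d(\alpha(p),\alpha(\bar p))\ge\frac1K\cdot\frac{|S|}2$ for all antipodal $p,\bar p$. An $R$-rough geodesic space is strongly shortcut if for some $K>1$ there is a bound on the lengths of its $\frac1K$-almost isometric $R$-circles (an asymptotic cone of $X$ is a geodesic space, so this applies to it with $R=0$). Asymptotic cone: for a nonprincipal ultrafilter $\mathscr U$ on $\mathbb N$, basepoints $b^{(m)}\in X$ and scalars $s^{(m)}\to\infty$, take sequences $(x_m)$ with $d(x_m,b^{(m)})/s^{(m)}$ bounded, pseudometric $\lim_{\mathscr U}d(x_m,x'_m)/s^{(m)}$, and pass to the metric quotient. *)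

theory Defs
  imports "HOL-Analysis.Analysis"
begin

definition rough_geodesic :: "'a set \<Rightarrow> ('a \<Rightarrow> 'a \<Rightarrow> real) \<Rightarrow> real \<Rightarrow> bool" where
  "rough_geodesic S d R \<longleftrightarrow>
     (\<forall>x1\<in>S. \<forall>x2\<in>S. \<exists>f :: real \<Rightarrow> 'a.
        f ` {0..d x1 x2} \<subseteq> S \<and> f 0 = x1 \<and> f (d x1 x2) = x2 \<and>
        (\<forall>s\<in>{0..d x1 x2}. \<forall>t\<in>{0..d x1 x2}. \<bar>d (f s) (f t) - \<bar>s - t\<bar>\<bar> \<le> R))"

text \<open>The Riemannian circle of length L > 0 is modelled as [0,L) with the intrinsic metric.\<close>

definition circ_dist :: "real \<Rightarrow> real \<Rightarrow> real \<Rightarrow> real" where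
  "circ_dist L p q = min \<bar>p - q\<bar> (L - \<bar>p - q\<bar>)"

definition antipode :: "real \<Rightarrow> real \<Rightarrow> real" where
  "antipode L p = (if p + L / 2 < L then p + L / 2 else p - L / 2)"

definition R_circle :: "'a set \<Rightarrow> ('a \<Rightarrow> 'a \<Rightarrow> real) \<Rightarrow> real \<Rightarrow> real \<Rightarrow> (real \<Rightarrow> 'a) \<Rightarrow> bool" where
  "R_circle S d R L \<alpha> \<longleftrightarrow> L > 0 \<and> \<alpha> ` {0..<L} \<subseteq> S \<and>
     (\<forall>p\<in>{0..<L}. \<forall>q\<in>{0..<L}. d (\<alpha> p) (\<alpha> q) \<le> circ_dist L p q + R)"

definition almost_isometric :: "('a \<Rightarrow> 'a \<Rightarrow> real) \<Rightarrow> real \<Rightarrow> real \<Rightarrow> (real \<Rightarrow> 'a) \<Rightarrow> bool" where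
  "almost_isometric d K L \<alpha> \<longleftrightarrow>
     (\<forall>p\<in>{0..<L}. d (\<alpha> p) (\<alpha> (antipode L p)) \<ge> (1 / K) * (L / 2))"

definition strongly_shortcut :: "'a set \<Rightarrow> ('a \<Rightarrow> 'a \<Rightarrow> real) \<Rightarrow> real \<Rightarrow> bool" where
  "strongly_shortcut S d R \<longleftrightarrow>
     (\<exists>K > 1. \<exists>M. \<forall>L \<alpha>. R_circle S d R L \<alpha> \<and> almost_isometric d K L \<alpha> \<longrightarrow> L \<le> M)"

definition nonprincipal_ultrafilter :: "nat filter \<Rightarrow> bool" where
  "nonprincipal_ultrafilter U \<longleftrightarrow> U \<noteq> bot \<and>
     (\<forall>P. eventually P U \<or> eventually (\<lambda>m. \<not> P m) U) \<and>
     (\<forall>n. eventually (\<lambda>m. m \<noteq> n) U)"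

text \<open>Asymptotic cone: admissible sequences, ultralimit pseudometric, metric quotient.\<close>

definition cone_seqs :: "('b \<Rightarrow> 'b \<Rightarrow> real) \<Rightarrow> (nat \<Rightarrow> 'b) \<Rightarrow> (nat \<Rightarrow> real) \<Rightarrow> (nat \<Rightarrow> 'b) set" where
  "cone_seqs d b s = {x. \<exists>B. \<forall>m. d (x m) (b m) / s m \<le> B}"

definition cone_pdist :: "('b \<Rightarrow> 'b \<Rightarrow> real) \<Rightarrow> nat filter \<Rightarrow> (nat \<Rightarrow> real) \<Rightarrow> (nat \<Rightarrow> 'b) \<Rightarrow> (nat \<Rightarrow> 'b) \<Rightarrow> real" where
  "cone_pdist d U s x y = Lim U (\<lambda>m. d (x m) (y m) / s m)"

definition cone_space :: "('b \<Rightarrow> 'b \<Rightarrow> real) \<Rightarrow> nat filter \<Rightarrow> (nat \<Rightarrow> 'b) \<Rightarrow> (nat \<Rightarrow> real) \<Rightarrow> (nat \<Rightarrow> 'b) set set" where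
  "cone_space d U b s =
     (\<lambda>x. {y \<in> cone_seqs d b s. cone_pdist d U s x y = 0}) ` cone_seqs d b s"

definition cone_dist :: "('b \<Rightarrow> 'b \<Rightarrow> real) \<Rightarrow> nat filter \<Rightarrow> (nat \<Rightarrow> real) \<Rightarrow> (nat \<Rightarrow> 'b) set \<Rightarrow> (nat \<Rightarrow> 'b) set \<Rightarrow> real" where
  "cone_dist d U s A B = cone_pdist d U s (SOME x. x \<in> A) (SOME y. y \<in> B)"

end

theory Submission
  imports Defs
begin

text \<open>
  Let K > 1 witness that X is strongly shortcut and let K' = (K + 1) / 2. Suppose the cone carried a
  1/K'-almost isometric circle of length L > 0. Sample it at n equally spaced points. Along the
  ultrafilter these samples are represented, at arbitrarily large scales S, by n points of X whose
  mutual distances are S times the cone distances up to a small relative error. Joining consecutive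
  points by R-rough geodesics (padded by time R at both ends) gives an R-circle in X of length about
  S L, and since K' < K it is still 1/K-almost isometric once n is large. As S is arbitrary this
  contradicts the length bound in X, so the cone has no 1/K'-almost isometric circles at all.
\<close>

section \<open>Ultralimits and asymptotic cones\<close>

lemma nonprincipal_ultrafilter_le_sequentially:
  assumes "nonprincipal_ultrafilter U"
  shows "U \<le> sequentially"
proof (rule filter_leI)
  fix P assume "eventually P sequentially"
  then have "finite {m. \<not> P m}"
    by (simp add: cofinite_eq_sequentially[symmetric] eventually_cofinite)
  then have "eventually (\<lambda>m. \<forall>n\<in>{m. \<not> P m}. m \<noteq> n) U"
    using assms by (intro eventually_ball_finite) (auto simp: nonprincipal_ultrafilter_def)
  then show "eventually P U"
    by (rule eventually_mono) blast
qed

lemma ultrafilter_tendsto_Lim: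
  fixes f :: "'i \<Rightarrow> 'b::t2_space"
  assumes nontriv: "U \<noteq> bot" and ultra: "\<And>P. eventually P U \<or> eventually (\<lambda>i. \<not> P i) U"
    and "compact C" and "eventually (\<lambda>i. f i \<in> C) U"
  shows "(f \<longlongrightarrow> Lim U f) U"
proof -
  have "filtermap f U \<noteq> bot" and "eventually (\<lambda>x. x \<in> C) (filtermap f U)"
    using assms by (simp_all add: filtermap_bot_iff eventually_filtermap)
  then obtain x where x: "inf (nhds x) (filtermap f U) \<noteq> bot"
    using \<open>compact C\<close> unfolding compact_filter by blast
  have "(f \<longlongrightarrow> x) U"
  proof (rule topological_tendstoI)
    fix S assume "open S" "x \<in> S"
    show "eventually (\<lambda>i. f i \<in> S) U"
    proof (rule ccontr)
      assume "\<not> eventually (\<lambda>i. f i \<in> S) U"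
      then have "eventually (\<lambda>y. y \<notin> S) (filtermap f U)"
        using ultra by (auto simp: eventually_filtermap)
      moreover have "eventually (\<lambda>y. y \<in> S) (nhds x)"
        using \<open>open S\<close> \<open>x \<in> S\<close> by (rule eventually_nhds_in_open)
      ultimately have "eventually (\<lambda>_. False) (inf (nhds x) (filtermap f U))"
        unfolding eventually_inf by blast
      with x show False by (simp add: eventually_False)
    qed
  qed
  with nontriv show ?thesis by (simp add: tendsto_Lim)
qed

lemma cone_pdist_tendsto:
  fixes b :: "nat \<Rightarrow> 'a::metric_space"
  assumes U: "nonprincipal_ultrafilter U" and s: "filterlim s at_top sequentially"
    and x: "x \<in> cone_seqs dist b s" and y: "y \<in> cone_seqs dist b s"
  shows "((\<lambda>m. dist (x m) (y m) / s m) \<longlongrightarrow> cone_pdist dist U s x y) U"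
proof -
  obtain Bx where Bx: "\<And>m. dist (x m) (b m) / s m \<le> Bx" using x by (auto simp: cone_seqs_def)
  obtain By where By: "\<And>m. dist (y m) (b m) / s m \<le> By" using y by (auto simp: cone_seqs_def)
  have "eventually (\<lambda>m. s m > 0) sequentially"
    using s by (simp add: filterlim_at_top_dense)
  then have "eventually (\<lambda>m. s m > 0) U"
    by (rule filter_leD[OF nonprincipal_ultrafilter_le_sequentially[OF U]])
  then have "eventually (\<lambda>m. dist (x m) (y m) / s m \<in> cball 0 (Bx + By)) U"
  proof (rule eventually_mono)
    fix m assume "s m > 0"
    moreover have "dist (x m) (y m) \<le> dist (x m) (b m) + dist (y m) (b m)"
      by (rule dist_triangle2)
    ultimately have "dist (x m) (y m) / s m \<le> dist (x m) (b m) / s m + dist (y m) (b m) / s m"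
      by (simp add: add_divide_distrib[symmetric] divide_right_mono)
    with \<open>s m > 0\<close> Bx[of m] By[of m] show "dist (x m) (y m) / s m \<in> cball 0 (Bx + By)"
      by simp
  qed
  with U show ?thesis
    unfolding cone_pdist_def nonprincipal_ultrafilter_def
    by (intro ultrafilter_tendsto_Lim[where C = "cball 0 (Bx + By)"]) auto
qed

lemma cone_space_some_mem:
  assumes "nonprincipal_ultrafilter U" and "A \<in> cone_space dist U b s"
  shows "(SOME x. x \<in> A) \<in> A \<inter> cone_seqs dist b s"
proof -
  obtain x where x: "x \<in> cone_seqs dist b s"
    and A: "A = {y \<in> cone_seqs dist b s. cone_pdist dist U s x y = 0}"
    using assms(2) by (auto simp: cone_space_def)
  have "U \<noteq> bot" using assms(1) by (simp add: nonprincipal_ultrafilter_def)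
  then have "cone_pdist dist U s x x = 0" unfolding cone_pdist_def by (simp add: tendsto_Lim)
  with x A have "x \<in> A" by simp
  then have "(SOME x. x \<in> A) \<in> A" by (metis someI)
  with A show ?thesis by blast
qed

lemma cone_dist_tendsto:
  fixes b :: "nat \<Rightarrow> 'a::metric_space"
  assumes U: "nonprincipal_ultrafilter U" and s: "filterlim s at_top sequentially"
    and A: "A \<in> cone_space dist U b s" and B: "B \<in> cone_space dist U b s"
  shows "((\<lambda>m. dist ((SOME x. x \<in> A) m) ((SOME x. x \<in> B) m) / s m)
           \<longlongrightarrow> cone_dist dist U s A B) U"
  unfolding cone_dist_def
  using cone_space_some_mem[OF U A] cone_space_some_mem[OF U B] by (intro cone_pdist_tendsto[OF U s]) auto

lemma cone_finite_configuration_approx: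
  fixes b :: "nat \<Rightarrow> 'a::metric_space" and n :: nat
  assumes U: "nonprincipal_ultrafilter U" and s: "filterlim s at_top sequentially"
    and A: "\<And>a. a < n \<Longrightarrow> A a \<in> cone_space dist U b s" and "eps > 0"
  obtains S Y where "S \<ge> C"
    and "\<And>a c. a < n \<Longrightarrow> c < n \<Longrightarrow>
           \<bar>dist (Y a) (Y c :: 'a) / S - cone_dist dist U s (A a) (A c)\<bar> < eps"
proof -
  define y where "y a = (SOME x. x \<in> A a)" for a
  have "eventually (\<lambda>m. \<forall>a\<in>{..<n}. \<forall>c\<in>{..<n}.
          \<bar>dist (y a m) (y c m) / s m - cone_dist dist U s (A a) (A c)\<bar> < eps) U"
  proof (intro eventually_ball_finite finite_lessThan ballI)
    fix a c assume "a \<in> {..<n}" "c \<in> {..<n}"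
    with A have "A a \<in> cone_space dist U b s" "A c \<in> cone_space dist U b s"
      by auto
    from tendstoD[OF cone_dist_tendsto[OF U s this] \<open>eps > 0\<close>]
    show "eventually (\<lambda>m. \<bar>dist (y a m) (y c m) / s m - cone_dist dist U s (A a) (A c)\<bar> < eps) U"
      by (simp add: y_def dist_real_def)
  qed
  moreover have "eventually (\<lambda>m. C \<le> s m) U"
    using filterlim_mono[OF s order_refl nonprincipal_ultrafilter_le_sequentially[OF U]]
    by (simp add: filterlim_at_top)
  moreover have "U \<noteq> bot"
    using U by (simp add: nonprincipal_ultrafilter_def)
  ultimately obtain m where "C \<le> s m" and "\<forall>a\<in>{..<n}. \<forall>c\<in>{..<n}.
      \<bar>dist (y a m) (y c m) / s m - cone_dist dist U s (A a) (A c)\<bar> < eps"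
    using eventually_happens'[OF _ eventually_conj] by blast
  then show thesis
    by (intro that[of "s m" "\<lambda>a. y a m"]) auto
qed

section \<open>Circles sampled at equally spaced points\<close>

lemma circ_dist_commute: "circ_dist L p q = circ_dist L q p"
  unfolding circ_dist_def by (simp add: abs_minus_commute)

lemma circ_dist_scale:
  assumes "c \<ge> 0"
  shows "circ_dist (c * L) (c * p) (c * q) = c * circ_dist L p q"
proof -
  have "\<bar>c * p - c * q\<bar> = c * \<bar>p - q\<bar>"
    using assms by (simp add: abs_mult flip: right_diff_distrib)
  then show ?thesis
    unfolding circ_dist_def using assms by (simp add: min_mult_distrib_left right_diff_distrib)
qed

lemma circ_dist_nat_ge_1:
  "a < n \<Longrightarrow> c < n \<Longrightarrow> a \<noteq> c \<Longrightarrow> 1 \<le> circ_dist (real n) (real a) (real c)"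
  unfolding circ_dist_def by auto

lemma circ_dist_nat_Suc_le_1:
  assumes "i < n"
  shows "circ_dist (real n) (real i) (real (Suc i mod n)) \<le> 1"
proof (cases "Suc i = n")
  case False
  with assms have "Suc i mod n = Suc i" by simp
  then show ?thesis unfolding circ_dist_def by auto
qed (auto simp: circ_dist_def)

lemma antipode_grid:
  assumes "n = 2 * k" and "i < n" and "h > 0" and "0 \<le> t" and "t < h"
  shows "antipode (real n * h) (real i * h + t) = real ((i + k) mod n) * h + t"
proof (cases "i < k")
  case True
  have "real (i + k) * h + t < (real (i + k) + 1) * h"
    using \<open>t < h\<close> by (simp add: algebra_simps)
  also have "\<dots> \<le> real n * h"
    using True assms(1,3) by (intro mult_right_mono) auto
  finally show ?thesis
    using True assms(1) unfolding antipode_def by (simp add: algebra_simps)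
next
  case False
  have "real n * h \<le> real (i + k) * h + t"
    using False assms(1,3,4) by (intro add_increasing2 mult_right_mono) auto
  moreover have "(i + k) mod n = i - k"
    using False assms(1,2) by (simp add: mod_if)
  ultimately show ?thesis
    using False assms(1) unfolding antipode_def by (simp add: algebra_simps of_nat_diff)
qed

lemma segment_decomposition:
  assumes "h > 0" and "0 \<le> p" and "p < real n * h"
  obtains i t where "i < n" "0 \<le> t" "t < h" "p = real i * h + t"
proof -
  define i where "i = nat \<lfloor>p / h\<rfloor>"
  have "0 \<le> p / h" "p / h < real n"
    using assms by (auto simp: field_simps)
  then have "i < n" and i: "real i = of_int \<lfloor>p / h\<rfloor>"
    unfolding i_def by linarith+
  moreover have "real i * h \<le> p" "p < (real i + 1) * h"
    unfolding i using assms(1) by (metis floor_divide_lower, metis floor_divide_upper)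
  ultimately show thesis
    by (intro that[of i "p - real i * h"]) (auto simp: algebra_simps)
qed

lemma R_circle_grid_dist:
  assumes "R_circle S d R (real n * h) \<alpha>" and "h > 0" and "a < n" and "c < n"
  shows "d (\<alpha> (real a * h)) (\<alpha> (real c * h)) \<le> h * circ_dist n a c + R"
proof -
  have "real a * h \<in> {0..<real n * h}" "real c * h \<in> {0..<real n * h}"
    using assms(2-4) by simp_all
  with assms(1) have "d (\<alpha> (real a * h)) (\<alpha> (real c * h)) \<le> circ_dist (h * n) (h * a) (h * c) + R"
    unfolding R_circle_def by (simp add: mult.commute)
  with circ_dist_scale[of h n a c] \<open>h > 0\<close> show ?thesis
    by simp
qed

lemma almost_isometric_grid_antipode:
  assumes "almost_isometric d K (real n * h) \<alpha>" and "n = 2 * k" and "h > 0" and "i < n"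
  shows "real n * h / (2 * K) \<le> d (\<alpha> (real i * h)) (\<alpha> (real ((i + k) mod n) * h))"
proof -
  have "real i * h \<in> {0..<real n * h}"
    using assms(3,4) by simp
  with assms(1) have "1 / K * (real n * h / 2) \<le> d (\<alpha> (real i * h)) (\<alpha> (antipode (real n * h) (real i * h)))"
    unfolding almost_isometric_def by blast
  with antipode_grid[OF assms(2,4,3), of 0] \<open>h > 0\<close> show ?thesis
    by simp
qed

section \<open>Closing a discrete cycle into a rough circle\<close>

lemma rough_geodesic_path:
  fixes x y :: "'a::metric_space"
  assumes "rough_geodesic (UNIV :: 'a set) dist R"
  obtains f :: "real \<Rightarrow> 'a" where "f 0 = x" and "f (dist x y) = y"
    and "\<And>u v. u \<in> {0..dist x y} \<Longrightarrow> v \<in> {0..dist x y} \<Longrightarrow> dist (f u) (f v) \<le> \<bar>u - v\<bar> + R"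
proof -
  obtain f :: "real \<Rightarrow> 'a" where "f 0 = x" and "f (dist x y) = y"
    and f: "\<forall>u\<in>{0..dist x y}. \<forall>v\<in>{0..dist x y}. \<bar>dist (f u) (f v) - \<bar>u - v\<bar>\<bar> \<le> R"
    using assms unfolding rough_geodesic_def by blast
  have "dist (f u) (f v) \<le> \<bar>u - v\<bar> + R" if "u \<in> {0..dist x y}" "v \<in> {0..dist x y}" for u v
    using f[rule_format, OF that] by (simp add: abs_le_iff)
  with \<open>f 0 = x\<close> \<open>f (dist x y) = y\<close> show thesis
    by (rule that)
qed

lemma abs_clamp_diff_le:
  fixes a b x y :: real
  shows "\<bar>max a (min x b) - max a (min y b)\<bar> \<le> \<bar>x - y\<bar>"
  by (simp add: abs_le_iff max_def min_def abs_if)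

definition rough_segment :: "'a::metric_space \<Rightarrow> 'a \<Rightarrow> real \<Rightarrow> real \<Rightarrow> (real \<Rightarrow> 'a) \<Rightarrow> bool" where
  "rough_segment x y h R \<gamma> \<longleftrightarrow>
     (\<forall>t\<in>{0..h}. dist (\<gamma> t) x \<le> t \<and> dist (\<gamma> t) y \<le> h - t) \<and>
     (\<forall>t t'. dist (\<gamma> t) (\<gamma> t') \<le> \<bar>t - t'\<bar> + R)"

lemma rough_segment_dist_ends:
  assumes "rough_segment x y h R \<gamma>" and "0 \<le> t" and "t \<le> h"
  shows "dist (\<gamma> t) x \<le> t" and "dist (\<gamma> t) y \<le> h - t"
  using assms unfolding rough_segment_def by auto

lemma rough_segment_dist:
  assumes "rough_segment x y h R \<gamma>"
  shows "dist (\<gamma> t) (\<gamma> t') \<le> \<bar>t - t'\<bar> + R"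
  using assms unfolding rough_segment_def by blast

lemma rough_geodesic_rough_segment:
  fixes x y :: "'a::metric_space"
  assumes rg: "rough_geodesic (UNIV :: 'a set) dist R" and "dist x y + 2 * R \<le> h"
  shows "\<exists>\<gamma>. rough_segment x y h R \<gamma>"
proof -
  obtain f :: "real \<Rightarrow> 'a" where f0: "f 0 = x" and fl: "f (dist x y) = y"
    and f: "\<And>u v. u \<in> {0..dist x y} \<Longrightarrow> v \<in> {0..dist x y} \<Longrightarrow> dist (f u) (f v) \<le> \<bar>u - v\<bar> + R"
    using rough_geodesic_path[OF rg] by blast
  define l where "l = dist x y"
  \<comment> \<open>idling for time R at both ends absorbs the additive error of f at the endpoints\<close>
  define c where "c t = max 0 (min (t - R) l)" for t
  have c: "c t \<in> {0..dist x y}" for t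
    unfolding c_def l_def by auto
  have "rough_segment x y h R (\<lambda>t. f (c t))"
    unfolding rough_segment_def
  proof (intro conjI ballI allI)
    fix t assume "t \<in> {0..h}"
    show "dist (f (c t)) x \<le> t"
    proof (cases "c t = 0")
      case False
      then have "c t \<le> t - R" unfolding c_def by auto
      moreover have "dist (f (c t)) (f 0) \<le> c t + R"
        using f[OF c[of t], of 0] c[of t] by (simp add: l_def)
      ultimately show ?thesis
        using f0 by simp
    qed (use f0 \<open>t \<in> {0..h}\<close> in simp)
  next
    fix t assume "t \<in> {0..h}"
    show "dist (f (c t)) y \<le> h - t"
    proof (cases "c t = l")
      case False
      then have "t - R \<le> c t" unfolding c_def l_def by (auto simp: max_def min_def split: if_splits)
      moreover have "dist (f (c t)) (f l) \<le> l - c t + R"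
        using f[OF c[of t], of l] c[of t] by (simp add: l_def)
      ultimately show ?thesis
        using fl assms(2) unfolding l_def by simp
    qed (use fl \<open>t \<in> {0..h}\<close> in \<open>simp add: l_def\<close>)
  next
    fix t t'
    show "dist (f (c t)) (f (c t')) \<le> \<bar>t - t'\<bar> + R"
      using f[OF c[of t] c[of t']] abs_clamp_diff_le[of 0 "t - R" l "t' - R"] unfolding c_def by simp
  qed
  then show ?thesis by blast
qed

lemma dist_triangle_chain:
  fixes x a b y :: "'a::metric_space"
  assumes "dist x a \<le> e1" and "dist a b \<le> e2" and "dist b y \<le> e3"
  shows "dist x y \<le> e1 + e2 + e3"
  using dist_triangle[where x = x and y = a and z = b] dist_triangle[where x = x and y = b and z = y] assms
  by linarith

lemma polygon_dist_le_circ_dist: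
  fixes Y :: "nat \<Rightarrow> 'a::metric_space" and g :: "nat \<Rightarrow> real \<Rightarrow> 'a"
  assumes "h > 0"
    and grid: "\<And>a c. a < n \<Longrightarrow> c < n \<Longrightarrow> dist (Y a) (Y c) \<le> h * circ_dist n a c"
    and segs: "\<And>i. i < n \<Longrightarrow> rough_segment (Y i) (Y (Suc i mod n)) h R (g i)"
    and ij: "i < j" "j < n" and t: "0 \<le> t" "t < h" and t': "0 \<le> t'" "t' < h"
  shows "dist (g i t) (g j t') \<le> circ_dist (real n * h) (real i * h + t) (real j * h + t')"
proof -
  have seg_i: "dist (g i t) (Y i) \<le> t" "dist (g i t) (Y (Suc i)) \<le> h - t"
    using rough_segment_dist_ends[OF segs, of i t] ij t by simp_all
  have seg_j: "dist (Y j) (g j t') \<le> t'" "dist (Y (Suc j mod n)) (g j t') \<le> h - t'"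
    using rough_segment_dist_ends[OF segs, of j t'] ij t' by (simp_all add: dist_commute)
  define d where "d = (real j * h + t') - (real i * h + t)"
  have "(real i + 1) * h \<le> real j * h"
    using ij \<open>h > 0\<close> by (intro mult_right_mono) auto
  then have "d \<ge> 0" unfolding d_def using t t' by (simp add: algebra_simps)
  \<comment> \<open>go forwards via Y (i + 1), ..., Y j, or backwards via Y i, Y (i - 1), ..., Y (j + 1)\<close>
  have "circ_dist n (Suc i) j \<le> real j - real (Suc i)"
    using ij by (simp add: circ_dist_def)
  from mult_left_mono[OF this, of h] \<open>h > 0\<close>
  have forward: "dist (g i t) (g j t') \<le> d"
    using dist_triangle_chain[OF seg_i(2) grid[of "Suc i" j] seg_j(1)] ij
    unfolding d_def by (simp add: algebra_simps)
  have "circ_dist n i (Suc j mod n) \<le> real n - (real (Suc j) - real i)"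
    using ij by (cases "Suc j = n") (auto simp: circ_dist_def)
  from mult_left_mono[OF this, of h] \<open>h > 0\<close>
  have backward: "dist (g i t) (g j t') \<le> real n * h - d"
    using dist_triangle_chain[OF seg_i(1) grid[of i "Suc j mod n"] seg_j(2)] ij
    unfolding d_def by (simp add: algebra_simps)
  have "circ_dist (real n * h) (real i * h + t) (real j * h + t') = min d (real n * h - d)"
    using \<open>d \<ge> 0\<close> unfolding circ_dist_def d_def by (simp add: abs_minus_commute)
  with forward backward show ?thesis by simp
qed

definition polygon :: "(nat \<Rightarrow> real \<Rightarrow> 'a) \<Rightarrow> real \<Rightarrow> real \<Rightarrow> 'a" where
  "polygon g h p = g (nat \<lfloor>p / h\<rfloor>) (p - real (nat \<lfloor>p / h\<rfloor>) * h)"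

lemma polygon_segment:
  assumes "h > 0" and "0 \<le> t" and "t < h"
  shows "polygon g h (real i * h + t) = g i t"
proof -
  have "(real i * h + t) / h = real i + t / h"
    using assms by (simp add: field_simps)
  moreover have "\<lfloor>t / h\<rfloor> = 0"
    using assms by (simp add: floor_eq_iff)
  ultimately show ?thesis
    unfolding polygon_def by simp
qed

lemma polygon_R_circle:
  fixes Y :: "nat \<Rightarrow> 'a::metric_space" and g :: "nat \<Rightarrow> real \<Rightarrow> 'a"
  assumes "R \<ge> 0" and "n \<ge> 2" and "h > 0"
    and grid: "\<And>a c. a < n \<Longrightarrow> c < n \<Longrightarrow> dist (Y a) (Y c) \<le> h * circ_dist n a c"
    and segs: "\<And>i. i < n \<Longrightarrow> rough_segment (Y i) (Y (Suc i mod n)) h R (g i)"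
  shows "R_circle UNIV dist R (real n * h) (polygon g h)"
  unfolding R_circle_def
proof (intro conjI ballI)
  show "real n * h > 0"
    using assms(2,3) by simp
  fix p q assume "p \<in> {0..<real n * h}" "q \<in> {0..<real n * h}"
  then have "0 \<le> p" "p < real n * h" "0 \<le> q" "q < real n * h" by auto
  obtain i t where i: "i < n" and t: "0 \<le> t" "t < h" and p: "p = real i * h + t"
    using segment_decomposition[OF \<open>h > 0\<close> \<open>0 \<le> p\<close> \<open>p < real n * h\<close>] .
  obtain j t' where j: "j < n" and t': "0 \<le> t'" "t' < h" and q: "q = real j * h + t'"
    using segment_decomposition[OF \<open>h > 0\<close> \<open>0 \<le> q\<close> \<open>q < real n * h\<close>] .
  have on_segments: "polygon g h p = g i t" "polygon g h q = g j t'"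
    unfolding p q by (rule polygon_segment[OF \<open>h > 0\<close> t], rule polygon_segment[OF \<open>h > 0\<close> t'])
  consider "i = j" | "i < j" | "j < i" by linarith
  then show "dist (polygon g h p) (polygon g h q) \<le> circ_dist (real n * h) p q + R"
  proof cases
    case 1
    have "2 * \<bar>t - t'\<bar> \<le> 2 * h"
      using t t' by (auto simp: abs_if)
    also have "\<dots> \<le> real n * h"
      using \<open>n \<ge> 2\<close> \<open>h > 0\<close> by (intro mult_right_mono) auto
    finally have "circ_dist (real n * h) p q = \<bar>t - t'\<bar>"
      unfolding circ_dist_def p q 1 by simp
    with rough_segment_dist[OF segs[OF i]] show ?thesis
      unfolding on_segments 1 by simp
  next
    case 2
    with polygon_dist_le_circ_dist[OF \<open>h > 0\<close> grid segs 2 j t t'] \<open>R \<ge> 0\<close> show ?thesis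
      unfolding on_segments by (simp add: p q)
  next
    case 3
    with polygon_dist_le_circ_dist[OF \<open>h > 0\<close> grid segs 3 i t' t] \<open>R \<ge> 0\<close> show ?thesis
      unfolding on_segments by (simp add: p q dist_commute circ_dist_commute)
  qed
qed simp

lemma rough_geodesic_cycle_to_circle:
  fixes Y :: "nat \<Rightarrow> 'a::metric_space"
  assumes "R \<ge> 0" and rg: "rough_geodesic (UNIV :: 'a set) dist R"
    and n: "n = 2 * k" "k \<ge> 1" and "h > 0"
    and grid: "\<And>a c. a < n \<Longrightarrow> c < n \<Longrightarrow> dist (Y a) (Y c) \<le> h * circ_dist n a c"
    and steps: "\<And>i. i < n \<Longrightarrow> dist (Y i) (Y (Suc i mod n)) + 2 * R \<le> h"
    and far: "\<And>i. i < n \<Longrightarrow> D \<le> dist (Y i) (Y ((i + k) mod n))"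
  obtains \<beta> where "R_circle (UNIV :: 'a set) dist R (real n * h) \<beta>"
    and "\<And>p. p \<in> {0..<real n * h} \<Longrightarrow> D - 2 * h \<le> dist (\<beta> p) (\<beta> (antipode (real n * h) p))"
proof -
  define g where "g i = (SOME \<gamma>. rough_segment (Y i) (Y (Suc i mod n)) h R \<gamma>)" for i
  have segs: "rough_segment (Y i) (Y (Suc i mod n)) h R (g i)" if "i < n" for i
    unfolding g_def using rough_geodesic_rough_segment[OF rg steps[OF that]] by (rule someI_ex)
  show thesis
  proof (rule that[of "polygon g h"])
    show "R_circle UNIV dist R (real n * h) (polygon g h)"
      using n by (intro polygon_R_circle[OF \<open>R \<ge> 0\<close> _ \<open>h > 0\<close> grid segs]) auto
  next
    fix p assume "p \<in> {0..<real n * h}"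
    then have "0 \<le> p" "p < real n * h" by auto
    then obtain i t where i: "i < n" and t: "0 \<le> t" "t < h" and p: "p = real i * h + t"
      by (rule segment_decomposition[OF \<open>h > 0\<close>])
    define j where "j = (i + k) mod n"
    have "j < n" unfolding j_def using n by simp
    have antip: "antipode (real n * h) p = real j * h + t"
      unfolding p j_def using antipode_grid[OF n(1) i \<open>h > 0\<close> t] .
    have "D \<le> dist (Y i) (Y j)"
      unfolding j_def by (rule far[OF i])
    also have "\<dots> \<le> h + dist (polygon g h p) (polygon g h (antipode (real n * h) p)) + h"
    proof (rule dist_triangle_chain)
      show "dist (Y i) (polygon g h p) \<le> h"
        using rough_segment_dist_ends(1)[OF segs[OF i] t(1)] t unfolding p polygon_segment[OF \<open>h > 0\<close> t]
        by (simp add: dist_commute)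
      show "dist (polygon g h (antipode (real n * h) p)) (Y j) \<le> h"
        using rough_segment_dist_ends(1)[OF segs[OF \<open>j < n\<close>] t(1)] t
        unfolding antip polygon_segment[OF \<open>h > 0\<close> t] by simp
    qed simp
    finally show "D - 2 * h \<le> dist (polygon g h p) (polygon g h (antipode (real n * h) p))"
      by simp
  qed
qed

lemma cone_circle_samples:
  fixes b :: "nat \<Rightarrow> 'a::metric_space"
  assumes U: "nonprincipal_ultrafilter U" and s: "filterlim s at_top sequentially"
    and circ: "R_circle (cone_space dist U b s) (cone_dist dist U s) 0 L \<alpha>"
    and ai: "almost_isometric (cone_dist dist U s) K L \<alpha>"
    and n: "n = 2 * k" "k \<ge> 1" and "eps > 0" and "C > 0"
  obtains S and Y :: "nat \<Rightarrow> 'a" where "S \<ge> C"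
    and "\<And>a c. a < n \<Longrightarrow> c < n \<Longrightarrow> dist (Y a) (Y c) < S * (L / n * circ_dist n a c + eps)"
    and "\<And>i. i < n \<Longrightarrow> S * (L / (2 * K) - eps) < dist (Y i) (Y ((i + k) mod n))"
proof -
  have "L > 0" and "n > 0"
    using circ n by (auto simp: R_circle_def)
  define h where "h = L / real n"
  have "h > 0" and L: "L = real n * h"
    unfolding h_def using \<open>L > 0\<close> \<open>n > 0\<close> by auto
  have samples: "\<alpha> (real a * h) \<in> cone_space dist U b s" if "a < n" for a
    using circ that \<open>h > 0\<close> unfolding R_circle_def L by auto
  obtain S Y where "S \<ge> C"
    and close: "\<And>a c. a < n \<Longrightarrow> c < n \<Longrightarrow>
          \<bar>dist (Y a) (Y c :: 'a) / S - cone_dist dist U s (\<alpha> (real a * h)) (\<alpha> (real c * h))\<bar> < eps"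
    using cone_finite_configuration_approx[where A = "\<lambda>a. \<alpha> (real a * h)", OF U s samples \<open>eps > 0\<close>]
    by blast
  have "S > 0"
    using \<open>S \<ge> C\<close> \<open>C > 0\<close> by simp
  show thesis
  proof (rule that[OF \<open>S \<ge> C\<close>])
    fix a c assume "a < n" "c < n"
    from R_circle_grid_dist[OF circ[unfolded L] \<open>h > 0\<close> this] close[OF this]
    have "dist (Y a) (Y c) / S < L / n * circ_dist n a c + eps"
      unfolding h_def by simp
    then show "dist (Y a) (Y c) < S * (L / n * circ_dist n a c + eps)"
      using \<open>S > 0\<close> by (simp add: field_simps)
  next
    fix i assume "i < n"
    then have "(i + k) mod n < n"
      using \<open>n > 0\<close> by simp
    from almost_isometric_grid_antipode[OF ai[unfolded L] n(1) \<open>h > 0\<close> \<open>i < n\<close>] close[OF \<open>i < n\<close> this]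
    have "L / (2 * K) - eps < dist (Y i) (Y ((i + k) mod n)) / S"
      unfolding L by linarith
    then show "S * (L / (2 * K) - eps) < dist (Y i) (Y ((i + k) mod n))"
      using \<open>S > 0\<close> by (simp add: field_simps)
  qed
qed

section \<open>The cone inherits strong shortcutness\<close>

lemma scaled_samples_grid:
  fixes Y :: "nat \<Rightarrow> 'a::metric_space" and n :: nat
  assumes "S > 0" and "eps > 0" and eps: "2 * eps \<le> (lam - 1) * L / n"
    and near: "\<And>a c. a < n \<Longrightarrow> c < n \<Longrightarrow> dist (Y a) (Y c) < S * (L / n * circ_dist n a c + eps)"
    and "a < n" and "c < n"
  shows "dist (Y a) (Y c) \<le> lam * S * L / n * circ_dist n a c"
proof (cases "a = c")
  case False
  have "eps \<le> (lam - 1) * L / n"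
    using eps \<open>eps > 0\<close> by simp
  also have "\<dots> \<le> (lam - 1) * L / n * circ_dist n a c"
    using mult_left_mono[OF circ_dist_nat_ge_1[OF \<open>a < n\<close> \<open>c < n\<close> False], of "(lam - 1) * L / n"]
      eps \<open>eps > 0\<close> by simp
  moreover have "(lam - 1) * L / n * circ_dist n a c = lam * L / n * circ_dist n a c - L / n * circ_dist n a c"
    by (simp add: left_diff_distrib diff_divide_distrib)
  ultimately have "L / n * circ_dist n a c + eps \<le> lam * L / n * circ_dist n a c"
    by linarith
  then have "S * (L / n * circ_dist n a c + eps) \<le> S * (lam * L / n * circ_dist n a c)"
    using \<open>S > 0\<close> by (intro mult_left_mono) auto
  with near[OF \<open>a < n\<close> \<open>c < n\<close>] show ?thesis
    by (simp add: mult_ac)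
qed (simp add: circ_dist_def)

lemma scaled_samples_steps:
  fixes Y :: "nat \<Rightarrow> 'a::metric_space" and n :: nat
  assumes "S > 0" and "L \<ge> 0" and eps: "2 * eps \<le> (lam - 1) * L / n" and "2 * R \<le> S * eps"
    and near: "\<And>a c. a < n \<Longrightarrow> c < n \<Longrightarrow> dist (Y a) (Y c) < S * (L / n * circ_dist n a c + eps)"
    and "i < n"
  shows "dist (Y i) (Y (Suc i mod n)) + 2 * R \<le> lam * S * L / n"
proof -
  have "dist (Y i) (Y (Suc i mod n)) < S * (L / n * circ_dist n i (Suc i mod n) + eps)"
    using near \<open>i < n\<close> by simp
  also have "\<dots> \<le> S * (L / n + eps)"
  proof -
    have "L / n * circ_dist n i (Suc i mod n) \<le> L / n"
      using mult_left_mono[OF circ_dist_nat_Suc_le_1[OF \<open>i < n\<close>], of "L / n"] \<open>L \<ge> 0\<close> by simp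
    with \<open>S > 0\<close> show ?thesis
      by (intro mult_left_mono) auto
  qed
  also have "\<dots> \<le> lam * S * L / n - S * eps"
  proof -
    have "(lam - 1) * L / n = lam * L / n - L / n"
      by (simp add: left_diff_distrib diff_divide_distrib)
    with eps have "L / n + 2 * eps \<le> lam * L / n"
      by linarith
    with \<open>S > 0\<close> have "S * (L / n + 2 * eps) \<le> S * (lam * L / n)"
      by (intro mult_left_mono) auto
    then show ?thesis
      by (simp add: algebra_simps)
  qed
  finally show ?thesis
    using \<open>2 * R \<le> S * eps\<close> by simp
qed

lemma almost_isometric_circle_from_samples:
  fixes Y :: "nat \<Rightarrow> 'a::metric_space"
  assumes "R \<ge> 0" and rg: "rough_geodesic (UNIV :: 'a set) dist R"
    and n: "n = 2 * k" "k \<ge> 1" and "L > 0" and "lam > 0" and "S > 0" and "eps > 0"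
    and eps: "2 * eps \<le> (lam - 1) * L / n" and "2 * R \<le> S * eps"
    and margin: "lam * L / (2 * K) \<le> L / (2 * K') - eps - 2 * lam * L / n"
    and near: "\<And>a c. a < n \<Longrightarrow> c < n \<Longrightarrow> dist (Y a) (Y c) < S * (L / n * circ_dist n a c + eps)"
    and far: "\<And>i. i < n \<Longrightarrow> S * (L / (2 * K') - eps) < dist (Y i) (Y ((i + k) mod n))"
  obtains \<beta> where "R_circle (UNIV :: 'a set) dist R (lam * S * L) \<beta>"
    and "almost_isometric dist K (lam * S * L) \<beta>"
proof -
  define h where "h = lam * S * L / n"
  have "n > 0" and "h > 0" and nh: "real n * h = lam * S * L"
    unfolding h_def using n \<open>lam > 0\<close> \<open>S > 0\<close> \<open>L > 0\<close> by auto
  have grid: "dist (Y a) (Y c) \<le> h * circ_dist n a c" if "a < n" "c < n" for a c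
    unfolding h_def by (rule scaled_samples_grid[OF \<open>S > 0\<close> \<open>eps > 0\<close> eps near that])
  have steps: "dist (Y i) (Y (Suc i mod n)) + 2 * R \<le> h" if "i < n" for i
    unfolding h_def using \<open>L > 0\<close> \<open>2 * R \<le> S * eps\<close> that
    by (intro scaled_samples_steps[OF \<open>S > 0\<close> _ eps _ near]) auto
  obtain \<beta> where \<beta>: "R_circle (UNIV :: 'a set) dist R (real n * h) \<beta>"
    and antipodal: "\<And>p. p \<in> {0..<real n * h} \<Longrightarrow>
      S * (L / (2 * K') - eps) - 2 * h \<le> dist (\<beta> p) (\<beta> (antipode (real n * h) p))"
    by (rule rough_geodesic_cycle_to_circle[OF \<open>R \<ge> 0\<close> rg n \<open>h > 0\<close> grid steps less_imp_le[OF far]]) auto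
  have "almost_isometric dist K (real n * h) \<beta>"
    unfolding almost_isometric_def
  proof
    fix p assume "p \<in> {0..<real n * h}"
    have "1 / K * (real n * h / 2) = S * (lam * L / (2 * K))"
      unfolding nh by (simp add: mult_ac)
    also have "\<dots> \<le> S * (L / (2 * K') - eps - 2 * lam * L / n)"
      using \<open>S > 0\<close> by (intro mult_left_mono[OF margin]) simp
    also have "\<dots> = S * (L / (2 * K') - eps) - 2 * h"
      unfolding h_def by (simp add: algebra_simps)
    also have "\<dots> \<le> dist (\<beta> p) (\<beta> (antipode (real n * h) p))"
      by (rule antipodal[OF \<open>p \<in> {0..<real n * h}\<close>])
    finally show "1 / K * (real n * h / 2) \<le> dist (\<beta> p) (\<beta> (antipode (real n * h) p))" .
  qed
  with \<beta> show thesis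
    unfolding nh by (rule that)
qed

lemma almost_isometry_margin:
  assumes "0 < K'" and "K' < K" and "L > 0"
  obtains lam n k where "lam > 1" and "n = 2 * k" and "k \<ge> 1"
    and "lam * L / (2 * K) \<le> L / (2 * K') - (lam - 1) * L / (2 * real n) - 2 * lam * L / real n"
proof -
  \<comment> \<open>lam lies halfway between 1 and K / K', so that lam / K falls short of 1 / K' by a fixed gap\<close>
  define lam where "lam = (K + K') / (2 * K')"
  define gap where "gap = (K - K') / (4 * K * K')"
  have "lam > 1" and "gap > 0"
    unfolding lam_def gap_def using assms by (simp_all add: field_simps)
  have gap: "gap = 1 / (2 * K') - lam / (2 * K)"
    unfolding lam_def gap_def using assms by (simp add: field_simps)
  obtain k :: nat where k: "5 * lam / (4 * gap) \<le> real k"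
    using real_arch_simple by blast
  have "0 < 5 * lam / (4 * gap)"
    using \<open>lam > 1\<close> \<open>gap > 0\<close> by simp
  with k have "k \<ge> 1"
    by simp
  have "(lam - 1) * L / (2 * real (2 * k)) + 2 * lam * L / real (2 * k) \<le> 5 * lam * L / (4 * k)"
    using \<open>k \<ge> 1\<close> \<open>L > 0\<close> by (simp add: field_simps)
  also have "\<dots> \<le> gap * L"
    using k \<open>k \<ge> 1\<close> \<open>gap > 0\<close> \<open>L > 0\<close> by (simp add: field_simps)
  also have "\<dots> = L / (2 * K') - lam * L / (2 * K)"
    unfolding gap by (simp add: algebra_simps)
  finally show thesis
    using \<open>lam > 1\<close> \<open>k \<ge> 1\<close> by (intro that[of lam "2 * k" k]) auto
qed

lemma cone_circle_not_almost_isometric: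
  fixes b :: "nat \<Rightarrow> 'a::metric_space"
  assumes "R \<ge> 0" and rg: "rough_geodesic (UNIV :: 'a set) dist R"
    and "0 < K'" and "K' < K"
    and bound: "\<And>L \<beta>. R_circle (UNIV :: 'a set) dist R L \<beta> \<Longrightarrow> almost_isometric dist K L \<beta> \<Longrightarrow> L \<le> M"
    and U: "nonprincipal_ultrafilter U" and s: "filterlim s at_top sequentially"
    and circ: "R_circle (cone_space dist U b s) (cone_dist dist U s) 0 L \<alpha>"
  shows "\<not> almost_isometric (cone_dist dist U s) K' L \<alpha>"
proof
  assume ai: "almost_isometric (cone_dist dist U s) K' L \<alpha>"
  have "L > 0"
    using circ by (simp add: R_circle_def)
  then obtain lam n k where "lam > 1" and n: "n = 2 * k" "k \<ge> 1"
    and margin: "lam * L / (2 * K) \<le> L / (2 * K') - (lam - 1) * L / (2 * real n) - 2 * lam * L / real n"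
    by (rule almost_isometry_margin[OF \<open>0 < K'\<close> \<open>K' < K\<close>])
  define eps where "eps = (lam - 1) * L / (2 * real n)"
  have "eps > 0"
    unfolding eps_def using n \<open>lam > 1\<close> \<open>L > 0\<close> by simp
  have eps: "2 * eps \<le> (lam - 1) * L / n"
    unfolding eps_def by simp
  \<comment> \<open>the scale S is taken so large that the padding 2 R is small and the lifted circle longer than M\<close>
  define C where "C = 1 + 2 * R / eps + \<bar>M\<bar> / (lam * L)"
  have "0 \<le> 2 * R / eps" and "0 \<le> \<bar>M\<bar> / (lam * L)"
    using \<open>R \<ge> 0\<close> \<open>eps > 0\<close> \<open>lam > 1\<close> \<open>L > 0\<close> by simp_all
  then have "C > 0"
    unfolding C_def by simp
  then obtain S and Y :: "nat \<Rightarrow> 'a" where "C \<le> S"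
    and near: "\<And>a c. a < n \<Longrightarrow> c < n \<Longrightarrow> dist (Y a) (Y c) < S * (L / n * circ_dist n a c + eps)"
    and far: "\<And>i. i < n \<Longrightarrow> S * (L / (2 * K') - eps) < dist (Y i) (Y ((i + k) mod n))"
    by (rule cone_circle_samples[OF U s circ ai n \<open>eps > 0\<close>]) auto
  have "S > 0" and "2 * R / eps \<le> S" and "\<bar>M\<bar> / (lam * L) < S"
    using \<open>C \<le> S\<close> \<open>0 \<le> 2 * R / eps\<close> \<open>0 \<le> \<bar>M\<bar> / (lam * L)\<close> unfolding C_def by linarith+
  then have "2 * R \<le> S * eps" and "M < lam * S * L"
    using \<open>eps > 0\<close> \<open>lam > 1\<close> \<open>L > 0\<close> by (simp_all add: pos_divide_le_eq pos_divide_less_eq mult_ac)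
  have "lam > 0"
    using \<open>lam > 1\<close> by simp
  obtain \<beta> where "R_circle (UNIV :: 'a set) dist R (lam * S * L) \<beta>"
    and "almost_isometric dist K (lam * S * L) \<beta>"
    by (rule almost_isometric_circle_from_samples[OF \<open>R \<ge> 0\<close> rg n \<open>L > 0\<close> \<open>lam > 0\<close> \<open>S > 0\<close>
          \<open>eps > 0\<close> eps \<open>2 * R \<le> S * eps\<close> margin[folded eps_def] near far])
  then have "lam * S * L \<le> M"
    by (rule bound)
  with \<open>M < lam * S * L\<close> show False
    by simp
qed

theorem corollary3p12:
  fixes R :: real
    and U :: "nat filter" and b :: "nat \<Rightarrow> 'a::metric_space" and s :: "nat \<Rightarrow> real"
  assumes "R \<ge> 0"
    and "rough_geodesic (UNIV :: 'a set) dist R"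
    and "strongly_shortcut (UNIV :: 'a set) dist R"
    and "nonprincipal_ultrafilter U"
    and "filterlim s at_top sequentially"
  shows "strongly_shortcut (cone_space dist U b s) (cone_dist dist U s) 0"
proof -
  obtain K M where "K > 1"
    and bound: "\<And>L \<beta>. R_circle (UNIV :: 'a set) dist R L \<beta> \<Longrightarrow> almost_isometric dist K L \<beta> \<Longrightarrow> L \<le> M"
    using assms(3) unfolding strongly_shortcut_def by blast
  define K' where "K' = (K + 1) / 2"
  have "1 < K'" and "K' < K"
    using \<open>K > 1\<close> unfolding K'_def by simp_all
  have "\<not> almost_isometric (cone_dist dist U s) K' L \<alpha>"
    if "R_circle (cone_space dist U b s) (cone_dist dist U s) 0 L \<alpha>" for L \<alpha>
    using cone_circle_not_almost_isometric[OF assms(1,2) _ \<open>K' < K\<close> bound assms(4,5) that] \<open>1 < K'\<close>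
    by simp
  with \<open>1 < K'\<close> show ?thesis
    unfolding strongly_shortcut_def by blast
qed

end
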